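(* In the setting below, the vector $1\otimes e^{\lambda_1}\in V^{\Lambda_1}$ is a highest weight vector of type $Vir(\tfrac45,\tfrac1{15})\otimes W^{\Omega_4}$, i.e. it satisfies (HW1)–(HW5) with $h=1/15$ and $\omega_j=\omega_4$.
   Context: Setting. $Q$ is the $E_6$ root lattice with simple roots $\alpha_1,\dots,\alpha_6$ (Dynkin chain $\alpha_1-\alpha_3-\alpha_4-\alpha_5-\alpha_6$, $\alpha_2$ attached to $\alpha_4$), form from the Cartan matrix, fundamental weights $\lambda_i$, $P=\bigoplus\mathbb Z\lambda_i$, $\mathfrak h=\mathbb C\otimes P$. $\varepsilon$ bimultiplicative on $P$ with $[\varepsilon(\lambda_i,\lambda_j)]$ rows $(1,1,1,1,1,1)$, $(-1,1,1,1,1,-1)$, $(-1,1,1,1,1,1)$, $(1,-1,1,1,1,1)$, $(1,1,1,1,1,-1)$, $(1,1,1,1,1,1)$. $V_P=S(\hat{\mathfrak h}^-)\otimes\mathbb C[P]$ with Heisenberg operators $h(n)$ ($[h(m),h'(n)]=m\langle h,h'\rangle\delta_{m+n,0}$, $h(n)1=0$ for $n>0$, $h(0)(u\otimes e^\beta)=\langle h,\beta\rangle u\otimes e^\beta$). For $\alpha\in Q$, acting on $V_P$: $Y(1\otimes e^\alpha,z)=\exp(\sum_{k\ge1}\frac{\alpha(-k)}kz^k)\exp(-\sum_{k\ge1}\frac{\alpha(k)}kz^{-k})e_\alpha z^{\alpha(0)}=\sum_n\{1\otimes e^\alpha\}_nz^{-n-1}$, $e_\alpha(u\otimes e^\beta)=\varepsilon(\alpha,\beta)u\otimes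 e^{\alpha+\beta}$, $z^{\alpha(0)}(u\otimes e^\beta)=z^{\langle\alpha,\beta\rangle}u\otimes e^\beta$; $Y(h_1(-1)\cdots h_k(-1)\otimes e^\alpha,z)=\,:h_1(z)\cdots h_k(z)Y(1\otimes e^\alpha,z):$, $h(z)=\sum_nh(n)z^{-n-1}$. $V^{\Lambda_1}$ is the subspace spanned by $S(\hat{\mathfrak h}^-)\otimes e^\nu$, $\nu\in\lambda_1+Q$. $\tau$: $\alpha_1\leftrightarrow\alpha_6$, $\alpha_3\leftrightarrow\alpha_5$ (so $\lambda_1\leftrightarrow\lambda_6$, $\lambda_3\leftrightarrow\lambda_5$); $\mathrm{Proj}(\nu)=(\nu+\tau\nu)/2$. $\theta=\alpha_1+2\alpha_2+2\alpha_3+3\alpha_4+2\alpha_5+\alpha_6$. Raising operators of $\tilde{\mathfrak a}$ ($F_4^{(1)}$): $\{\beta_1\}_0=\{1\otimes e^{\alpha_2}\}_0$, $\{\beta_2\}_0=\{1\otimes e^{\alpha_4}\}_0$, $\{\beta_3\}_0=\{1\otimes e^{\alpha_3}\}_0+\{1\otimes e^{\alpha_5}\}_0$, $\{\beta_4\}_0=\{1\otimes e^{\alpha_1}\}_0+\{1\otimes e^{\alpha_6}\}_0$, $\{1\otimes e^{-\theta}\}_1$. Coset conformal vector $\omega=\frac1{10}[(-\lambda_1+\lambda_6)(-1)^2+(\lambda_3-\lambda_5)(-1)^2+(\lambda_1-\lambda_3+\lambda_5-\lambda_6)(-1)^2]\otimes e^0+\frac15(-1\otimes e^{\pm\gamma_1}-1\otimes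 e^{\pm\gamma_2}+1\otimes e^{\pm\gamma_3})$, $\gamma_1=\alpha_1-\alpha_6$, $\gamma_2=\alpha_3-\alpha_5$, $\gamma_3=\gamma_1+\gamma_2$, $1\otimes e^{\pm\gamma}:=1\otimes e^\gamma+1\otimes e^{-\gamma}$; $L(n)=\{\omega\}_{n+1}$ on $V_P$ (Virasoro, $c=4/5$, commuting with $\tilde{\mathfrak a}$). $\omega_4=\frac{\lambda_1+\lambda_6}2$, $\Omega_4$ the level one $F_4^{(1)}$ weight with finite part $\omega_4$, $W^{\Omega_4}$ its irreducible module. A nonzero $v$ is a highest weight vector of type $Vir(\frac45,h)\otimes W^{\Omega_j}$ if (HW1) $\{1\otimes e^{-\theta}\}_1v=0$; (HW2) $\{\beta_i\}_0v=0$, $i=1,\dots,4$; (HW3) $L(1)v=L(2)v=0$; (HW4) $L(0)v=hv$; (HW5) $v\in\bigoplus_kS(\hat{\mathfrak h}^-)\otimes e^{\nu_k}$ with $\mathrm{Proj}(\nu_k)=\omega_j$. *)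

theory Defs
  imports Complex_Main "HOL-Library.Multiset" "HOL-Library.Groups_Big_Fun" "HOL-Library.Function_Algebras"
begin

datatype idx = I1 | I2 | I3 | I4 | I5 | I6

lemma UNIV_idx: "(UNIV :: idx set) = {I1,I2,I3,I4,I5,I6}"
  using idx.exhaust by auto

instance idx :: finite
  by standard (simp add: UNIV_idx)

text \<open>Conventions.
  lat: element of P, written in the basis of fundamental weights lambda_i (integer coordinates).
  rt:  element of Q, written in the basis of simple roots alpha_i (integer coordinates).
  hv:  element of h = C (x) P, written in the basis alpha_i (complex coordinates).
  A monomial of S(h^-) is a multiset of pairs (i,m), the pair (i,m) standing for alpha_i(-(m+1)).
  A vector of V_P is a coefficient function on the basis (monomial) (x) e^beta.\<close>

type_synonym lat = "idx \<Rightarrow> int"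
type_synonym rt = "idx \<Rightarrow> int"
type_synonym hv = "idx \<Rightarrow> complex"
type_synonym mono = "(idx \<times> nat) multiset"
type_synonym V = "mono \<times> lat \<Rightarrow> complex"

definition adj :: "idx \<Rightarrow> idx \<Rightarrow> bool" where
  "adj i j \<longleftrightarrow> (i,j) \<in> {(I1,I3),(I3,I4),(I4,I5),(I5,I6),(I2,I4)} \<or> (j,i) \<in> {(I1,I3),(I3,I4),(I4,I5),(I5,I6),(I2,I4)}"

text \<open>Cartan matrix of E6: entry (i,j) is the form value on alpha_i, alpha_j.\<close>
definition cartan :: "idx \<Rightarrow> idx \<Rightarrow> int" where
  "cartan i j = (if i = j then 2 else if adj i j then -1 else 0)"

definition unitv :: "idx \<Rightarrow> idx \<Rightarrow> int" where
  "unitv i = (\<lambda>j. if j = i then 1 else 0)"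

abbreviation sroot :: "idx \<Rightarrow> rt" where "sroot i \<equiv> unitv i"
abbreviation fwt :: "idx \<Rightarrow> lat" where "fwt i \<equiv> unitv i"

text \<open>element of Q as element of P (lambda-coordinates): alpha_i = sum_j A_ij lambda_j\<close>
definition rlat :: "rt \<Rightarrow> lat" where
  "rlat q = (\<lambda>j. \<Sum>i\<in>UNIV. q i * cartan i j)"

definition rh :: "rt \<Rightarrow> hv" where
  "rh q = (\<lambda>i. of_int (q i))"

definition pairQP :: "rt \<Rightarrow> lat \<Rightarrow> int" where
  "pairQP q \<beta> = (\<Sum>i\<in>UNIV. q i * \<beta> i)"

text \<open>fundamental weights as elements of h in alpha-coordinates (inverse Cartan matrix of E6)\<close>
definition fwtab :: "idx \<Rightarrow> idx \<Rightarrow> rat" where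
  "fwtab i j = (case i of
      I1 \<Rightarrow> (case j of I1 \<Rightarrow> 4/3 | I2 \<Rightarrow> 1 | I3 \<Rightarrow> 5/3 | I4 \<Rightarrow> 2 | I5 \<Rightarrow> 4/3 | I6 \<Rightarrow> 2/3)
    | I2 \<Rightarrow> (case j of I1 \<Rightarrow> 1 | I2 \<Rightarrow> 2 | I3 \<Rightarrow> 2 | I4 \<Rightarrow> 3 | I5 \<Rightarrow> 2 | I6 \<Rightarrow> 1)
    | I3 \<Rightarrow> (case j of I1 \<Rightarrow> 5/3 | I2 \<Rightarrow> 2 | I3 \<Rightarrow> 10/3 | I4 \<Rightarrow> 4 | I5 \<Rightarrow> 8/3 | I6 \<Rightarrow> 4/3)
    | I4 \<Rightarrow> (case j of I1 \<Rightarrow> 2 | I2 \<Rightarrow> 3 | I3 \<Rightarrow> 4 | I4 \<Rightarrow> 6 | I5 \<Rightarrow> 4 | I6 \<Rightarrow> 2)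
    | I5 \<Rightarrow> (case j of I1 \<Rightarrow> 4/3 | I2 \<Rightarrow> 2 | I3 \<Rightarrow> 8/3 | I4 \<Rightarrow> 4 | I5 \<Rightarrow> 10/3 | I6 \<Rightarrow> 5/3)
    | I6 \<Rightarrow> (case j of I1 \<Rightarrow> 2/3 | I2 \<Rightarrow> 1 | I3 \<Rightarrow> 4/3 | I4 \<Rightarrow> 2 | I5 \<Rightarrow> 5/3 | I6 \<Rightarrow> 4/3))"

definition fwh :: "idx \<Rightarrow> hv" where
  "fwh i = (\<lambda>j. of_rat (fwtab i j))"

lemma fwh_dual: "(\<Sum>k\<in>UNIV. fwh i k * of_int (cartan k j)) = (if i = j then 1 else 0)"
  by (cases i; cases j)
     (simp_all add: UNIV_idx fwh_def fwtab_def cartan_def adj_def of_rat_divide)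

definition epsm :: "idx \<Rightarrow> idx \<Rightarrow> int" where
  "epsm i j = (case i of
      I1 \<Rightarrow> 1
    | I2 \<Rightarrow> (if j = I1 \<or> j = I6 then -1 else 1)
    | I3 \<Rightarrow> (if j = I1 then -1 else 1)
    | I4 \<Rightarrow> (if j = I2 then -1 else 1)
    | I5 \<Rightarrow> (if j = I6 then -1 else 1)
    | I6 \<Rightarrow> 1)"

text \<open>bimultiplicative extension: eps(x,y) = prod_ij eps(lambda_i,lambda_j)^(x_i y_j)\<close>
definition eps :: "lat \<Rightarrow> lat \<Rightarrow> complex" where
  "eps x y = (\<Prod>i\<in>UNIV. \<Prod>j\<in>UNIV. (of_int (epsm i j)) powi (x i * y j))"

definition basis :: "mono \<Rightarrow> lat \<Rightarrow> V" where
  "basis M \<beta> = (\<lambda>b. if b = (M, \<beta>) then 1 else 0)"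

definition smult :: "complex \<Rightarrow> V \<Rightarrow> V" where
  "smult a v = (\<lambda>b. a * v b)"

definition lin :: "(mono \<Rightarrow> lat \<Rightarrow> V) \<Rightarrow> V \<Rightarrow> V" where
  "lin f v = (\<lambda>b. Sum_any (\<lambda>c. v c * f (fst c) (snd c) b))"

definition heis_basis :: "idx \<Rightarrow> int \<Rightarrow> mono \<Rightarrow> lat \<Rightarrow> V" where
  "heis_basis i n M \<beta> =
    (if n < 0 then basis (M + {#(i, nat (- n - 1))#}) \<beta>
     else if n = 0 then smult (of_int (\<beta> i)) (basis M \<beta>)
     else (\<Sum>j\<in>UNIV. smult (of_int (n * cartan i j * int (count M (j, nat (n - 1)))))
                            (basis (M - {#(j, nat (n - 1))#}) \<beta>)))"

definition heis :: "hv \<Rightarrow> int \<Rightarrow> V \<Rightarrow> V" where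
  "heis c n v = (\<Sum>i\<in>UNIV. smult (c i) (lin (heis_basis i n) v))"

definition parts :: "nat \<Rightarrow> (nat \<Rightarrow> nat) set" where
  "parts a = {m. (\<forall>k. m k \<noteq> 0 \<longrightarrow> 1 \<le> k \<and> k \<le> a) \<and> (\<Sum>k\<in>{1..a}. k * m k) = a}"

text \<open>coefficient of t^a in exp(sum_{k>=1} s * X(k) t^k / k) (the X(k) commute)\<close>
definition expco :: "(nat \<Rightarrow> V \<Rightarrow> V) \<Rightarrow> complex \<Rightarrow> nat \<Rightarrow> V \<Rightarrow> V" where
  "expco X s a v = (\<Sum>m\<in>parts a.
      smult (\<Prod>k\<in>{1..a}. s ^ m k / (of_nat k ^ m k * fact (m k)))
            (fold (\<lambda>k w. (X k ^^ m k) w) [1..<Suc a] v))"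

text \<open>{1 (x) e^alpha}_n on a basis vector u (x) e^beta: coefficient of z^(-n-1) in
  exp(sum alpha(-k) z^k/k) exp(-sum alpha(k) z^(-k)/k) eps(alpha,beta) z^<alpha,beta> u (x) e^(alpha+beta)\<close>
definition vop_basis :: "rt \<Rightarrow> int \<Rightarrow> mono \<Rightarrow> lat \<Rightarrow> V" where
  "vop_basis q n M \<beta> = (\<lambda>x. Sum_any (\<lambda>b::nat.
      (let a = - n - 1 - pairQP q \<beta> + int b in
       if a \<ge> 0 then
         expco (\<lambda>k. heis (rh q) (- int k)) 1 (nat a)
           (expco (\<lambda>k. heis (rh q) (int k)) (-1) b
              (smult (eps (rlat q) \<beta>) (basis M (rlat q + \<beta>))))
       else 0) x))"

definition vop :: "rt \<Rightarrow> int \<Rightarrow> V \<Rightarrow> V" where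
  "vop q n = lin (vop_basis q n)"

definition nord :: "hv \<Rightarrow> int \<Rightarrow> hv \<Rightarrow> int \<Rightarrow> V \<Rightarrow> V" where
  "nord c m d p v = (if m > 0 then heis d p (heis c m v) else heis c m (heis d p v))"

text \<open>{c(-1) d(-1) (x) e^0}_n, from Y(c(-1)d(-1) (x) e^0, z) = :c(z) d(z):\<close>
definition quad :: "hv \<Rightarrow> hv \<Rightarrow> int \<Rightarrow> V \<Rightarrow> V" where
  "quad c d n v = (\<lambda>x. Sum_any (\<lambda>m::int. nord c m d (n - 1 - m) v x))"

definition hA :: hv where "hA = - fwh I1 + fwh I6"
definition hB :: hv where "hB = fwh I3 - fwh I5"
definition hC :: hv where "hC = fwh I1 - fwh I3 + fwh I5 - fwh I6"

definition gam1 :: rt where "gam1 = sroot I1 - sroot I6"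
definition gam2 :: rt where "gam2 = sroot I3 - sroot I5"
definition gam3 :: rt where "gam3 = gam1 + gam2"

text \<open>{omega}_n, using linearity of Y in the state\<close>
definition omega_mode :: "int \<Rightarrow> V \<Rightarrow> V" where
  "omega_mode n v =
     smult (1/10) (quad hA hA n v + quad hB hB n v + quad hC hC n v)
   + smult (1/5) (- (vop gam1 n v + vop (- gam1) n v)
                  - (vop gam2 n v + vop (- gam2) n v)
                  + (vop gam3 n v + vop (- gam3) n v))"

definition Lop :: "int \<Rightarrow> V \<Rightarrow> V" where
  "Lop n = omega_mode (n + 1)"

definition theta :: rt where
  "theta = sroot I1 + 2 * sroot I2 + 2 * sroot I3 + 3 * sroot I4 + 2 * sroot I5 + sroot I6"

definition tau :: "idx \<Rightarrow> idx" where
  "tau i = (case i of I1 \<Rightarrow> I6 | I6 \<Rightarrow> I1 | I3 \<Rightarrow> I5 | I5 \<Rightarrow> I3 | _ \<Rightarrow> i)"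

definition Proj :: "lat \<Rightarrow> idx \<Rightarrow> rat" where
  "Proj \<nu> = (\<lambda>i. (of_int (\<nu> i) + of_int (\<nu> (tau i))) / 2)"

definition omega4 :: "idx \<Rightarrow> rat" where
  "omega4 = (\<lambda>i. if i = I1 \<or> i = I6 then 1/2 else 0)"

definition hw_vector :: "complex \<Rightarrow> (idx \<Rightarrow> rat) \<Rightarrow> V \<Rightarrow> bool" where
  "hw_vector h wj v \<longleftrightarrow> v \<noteq> 0
     \<and> vop (- theta) 1 v = 0
     \<and> vop (sroot I2) 0 v = 0
     \<and> vop (sroot I4) 0 v = 0
     \<and> vop (sroot I3) 0 v + vop (sroot I5) 0 v = 0
     \<and> vop (sroot I1) 0 v + vop (sroot I6) 0 v = 0
     \<and> Lop 1 v = 0 \<and> Lop 2 v = 0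
     \<and> Lop 0 v = smult h v
     \<and> (\<forall>M \<nu>. v (M, \<nu>) \<noteq> 0 \<longrightarrow> Proj \<nu> = wj)"

end

theory Submission
  imports Defs
begin

text \<open>The vector \<open>1 \<otimes> e\<^bsup>\<lambda>\<^sub>1\<^esup>\<close> carries no oscillators, so every positive Heisenberg
  mode kills it. Consequently \<open>Y(1 \<otimes> e\<^sup>\<alpha>, z)(1 \<otimes> e\<^sup>\<beta>)\<close> is \<open>z\<^bsup>\<langle>\<alpha>,\<beta>\<rangle>\<^esup>\<close> times a power
  series in \<open>z\<close>, so the mode \<open>{1 \<otimes> e\<^sup>\<alpha>}\<^sub>n\<close> vanishes on it as soon as \<open>-n-1 < \<langle>\<alpha>,\<beta>\<rangle>\<close>;
  likewise \<open>:c(z)d(z):\<close> contributes to \<open>L(1)\<close>, \<open>L(2)\<close> only through annihilation modes, and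
  to \<open>L(0)\<close> only through \<open>c(0)d(0)\<close>. Since \<open>\<langle>\<alpha>,\<lambda>\<^sub>1\<rangle>\<close> is the \<open>\<alpha>\<^sub>1\<close>-coordinate of \<open>\<alpha>\<close>, which is
  \<open>\<ge> 0\<close> for the simple roots (used with \<open>n = 0\<close>) and \<open>\<ge> -1\<close> for \<open>-\<theta>\<close> and \<open>\<plusminus>\<gamma>\<^sub>k\<close>
  (used with \<open>n \<ge> 1\<close>), all vertex operator terms drop out, and
  \<open>L(0)\<close> acts by \<open>(1/10)(4/9 + 1/9 + 1/9) = 1/15\<close>.\<close>

definition oscillator_free :: "V set" where
  "oscillator_free = {v. \<forall>M \<beta>. v (M, \<beta>) \<noteq> 0 \<longrightarrow> M = {#}}"

definition pair_hv :: "hv \<Rightarrow> lat \<Rightarrow> complex" where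
  "pair_hv c \<beta> = (\<Sum>i\<in>UNIV. c i * of_int (\<beta> i))"

lemma sum_UNIV_idx: "(\<Sum>i\<in>UNIV. f i) = f I1 + f I2 + f I3 + f I4 + f I5 + f I6"
  by (simp add: UNIV_idx add.assoc)

lemma Sum_any_zero [simp]: "Sum_any (0 :: 'a \<Rightarrow> 'b::comm_monoid_add) = 0"
  by (simp add: zero_fun_def)

lemma smult_zero [simp]: "smult a 0 = 0"
  by (simp add: smult_def fun_eq_iff)

lemma smult_one [simp]: "smult 1 v = v"
  by (simp add: smult_def)

lemma basis_nonzero: "basis M \<beta> \<noteq> 0"
  by (auto simp: basis_def fun_eq_iff)

lemma basis_oscillator_free [simp]: "basis {#} \<beta> \<in> oscillator_free"
  by (simp add: oscillator_free_def basis_def)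

lemma smult_oscillator_free [simp]: "v \<in> oscillator_free \<Longrightarrow> smult a v \<in> oscillator_free"
  by (simp add: oscillator_free_def smult_def)

lemma lin_smult_basis: "lin f (smult a (basis M \<beta>)) = smult a (f M \<beta>)"
proof -
  have "Sum_any (\<lambda>c. smult a (basis M \<beta>) c * f (fst c) (snd c) b)
      = Sum_any (\<lambda>c. if c = (M, \<beta>) then a * f M \<beta> b else 0)" for b
    by (rule Sum_any.cong) (simp add: smult_def basis_def)
  then show ?thesis
    by (simp add: lin_def smult_def fun_eq_iff)
qed

lemma lin_basis: "lin f (basis M \<beta>) = f M \<beta>"
  using lin_smult_basis[of f 1] by simp

lemma lin_zero [simp]: "lin f 0 = 0"
  by (simp add: lin_def fun_eq_iff)

lemma heis_zero [simp]: "heis c n 0 = 0"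
  by (simp add: heis_def)

lemma heis_pos_mode_oscillator_free:
  assumes "n > 0" "v \<in> oscillator_free"
  shows "heis c n v = 0"
proof -
  have summands_vanish: "(\<lambda>x. v x * heis_basis i n (fst x) (snd x) b) = (0 :: V)" for i b
  proof
    fix x :: "mono \<times> lat"
    obtain M \<beta> where x: "x = (M, \<beta>)"
      by fastforce
    then have "v x = 0 \<or> M = {#}"
      using assms(2) by (auto simp: oscillator_free_def)
    then show "v x * heis_basis i n (fst x) (snd x) b = 0 x"
      using assms(1) x by (auto simp: heis_basis_def smult_def)
  qed
  then have "lin (heis_basis i n) v = 0" for i
    unfolding lin_def summands_vanish Sum_any_zero by (simp add: fun_eq_iff)
  then show ?thesis
    by (simp add: heis_def)
qed

lemma heis_zero_mode_basis:
  "heis c 0 (smult a (basis M \<beta>)) = smult (a * pair_hv c \<beta>) (basis M \<beta>)"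
proof -
  have "heis c 0 (smult a (basis M \<beta>))
      = (\<Sum>i\<in>UNIV. smult (c i) (smult a (smult (of_int (\<beta> i)) (basis M \<beta>))))"
    by (simp only: heis_def lin_smult_basis) (simp add: heis_basis_def)
  then show ?thesis
    by (simp add: pair_hv_def sum_UNIV_idx smult_def fun_eq_iff algebra_simps)
qed

lemma funpow_fixed_point: "f x = x \<Longrightarrow> (f ^^ n) x = x"
  by (induction n) auto

lemma fold_funpow_zero:
  assumes "\<And>k. X k 0 = 0"
  shows "fold (\<lambda>k w. (X k ^^ m k) w) ks 0 = 0"
  by (induction ks) (simp_all add: assms funpow_fixed_point)

lemma fold_funpow_annihilates:
  assumes "\<And>k. X k 0 = 0"
    and "\<And>k v. k \<ge> 1 \<Longrightarrow> v \<in> oscillator_free \<Longrightarrow> X k v = 0"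
    and "v \<in> oscillator_free" "\<forall>k\<in>set ks. k \<ge> 1" "\<exists>k\<in>set ks. m k > 0"
  shows "fold (\<lambda>k w. (X k ^^ m k) w) ks v = 0"
  using assms(3-5)
proof (induction ks arbitrary: v)
  case (Cons k ks)
  show ?case
  proof (cases "m k > 0")
    case True
    then obtain j where "m k = Suc j"
      using gr0_implies_Suc by blast
    then have "(X k ^^ m k) v = 0"
      using assms(1) assms(2)[of k v] Cons.prems
      by (simp add: funpow_Suc_right funpow_fixed_point del: funpow.simps)
    then show ?thesis
      using fold_funpow_zero[of X] assms(1) by simp
  next
    case False
    then show ?thesis
      using Cons by simp
  qed
qed simp

lemma parts_pos_nonzero:
  assumes "m \<in> parts b" "b > 0"
  shows "\<exists>k\<in>{1..b}. m k > 0"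
proof (rule ccontr)
  assume "\<not> ?thesis"
  then have "(\<Sum>k\<in>{1..b}. k * m k) = 0"
    by simp
  with assms show False
    by (simp add: parts_def)
qed

lemma expco_zero:
  assumes "\<And>k. X k 0 = 0"
  shows "expco X s b 0 = 0"
  by (simp add: expco_def fold_funpow_zero assms)

lemma expco_annihilates:
  assumes "\<And>k. X k 0 = 0"
    and "\<And>k v. k \<ge> 1 \<Longrightarrow> v \<in> oscillator_free \<Longrightarrow> X k v = 0"
    and "v \<in> oscillator_free" "b > 0"
  shows "expco X s b v = 0"
proof -
  have "fold (\<lambda>k w. (X k ^^ m k) w) [1..<Suc b] v = 0" if "m \<in> parts b" for m
    using parts_pos_nonzero[OF that assms(4)] assms(1-3)
    by (intro fold_funpow_annihilates) (auto simp: atLeastLessThanSuc_atLeastAtMost)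
  then show ?thesis
    by (simp add: expco_def)
qed

lemma vop_basis_vanishes:
  assumes "- n - 1 < pairQP q \<beta>"
  shows "vop q n (basis {#} \<beta>) = 0"
proof -
  let ?u = "smult (eps (rlat q) \<beta>) (basis {#} (rlat q + \<beta>))"
  have "expco (\<lambda>k. heis (rh q) (int k)) (-1) b ?u = 0" if "b > 0" for b
    using that by (intro expco_annihilates) (auto intro!: heis_pos_mode_oscillator_free)
  then have "(let a = - n - 1 - pairQP q \<beta> + int b in
       if a \<ge> 0 then expco (\<lambda>k. heis (rh q) (- int k)) 1 (nat a)
                        (expco (\<lambda>k. heis (rh q) (int k)) (-1) b ?u)
       else 0) = 0" for b
    using assms by (cases "b = 0") (simp_all add: Let_def expco_zero)
  then show ?thesis
    by (simp add: vop_def lin_basis vop_basis_def fun_eq_iff)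
qed

lemma nord_basis:
  "nord c m d p (basis {#} \<beta>) = (if m \<le> 0 \<and> p \<le> 0 then heis c m (heis d p (basis {#} \<beta>)) else 0)"
  by (auto simp: nord_def heis_pos_mode_oscillator_free)

lemma quad_basis_vanishes:
  assumes "n \<ge> 2"
  shows "quad c d n (basis {#} \<beta>) = 0"
proof -
  have "(\<lambda>m. nord c m d (n - 1 - m) (basis {#} \<beta>) x) = 0" for x
    using assms by (auto simp: nord_basis fun_eq_iff)
  then show ?thesis
    by (simp add: quad_def fun_eq_iff)
qed

lemma quad_one_basis:
  "quad c d 1 (basis {#} \<beta>) = smult (pair_hv c \<beta> * pair_hv d \<beta>) (basis {#} \<beta>)"
proof -
  have "(\<lambda>m. nord c m d (- m) (basis {#} \<beta>) x)
      = (\<lambda>m. if m = 0 then heis c 0 (heis d 0 (basis {#} \<beta>)) x else 0)" for x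
    by (auto simp: nord_basis fun_eq_iff)
  then have "quad c d 1 (basis {#} \<beta>) = heis c 0 (heis d 0 (basis {#} \<beta>))"
    by (simp add: quad_def fun_eq_iff)
  then show ?thesis
    using heis_zero_mode_basis[of d 1] by (simp add: heis_zero_mode_basis mult.commute)
qed

lemma pairQP_fwt: "pairQP q (fwt i) = q i"
  by (cases i) (simp_all add: pairQP_def sum_UNIV_idx unitv_def)

lemma pair_hv_fwt: "pair_hv c (fwt i) = c i"
  by (cases i) (simp_all add: pair_hv_def sum_UNIV_idx unitv_def)

lemma vop_fwt_vanishes: "- n - 1 < q i \<Longrightarrow> vop q n (basis {#} (fwt i)) = 0"
  by (rule vop_basis_vanishes) (simp add: pairQP_fwt)

lemma Proj_fwt_I1: "Proj (fwt I1) = omega4"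
proof
  fix i
  show "Proj (fwt I1) i = omega4 i"
    by (cases i) (simp_all add: Proj_def omega4_def tau_def unitv_def)
qed

lemma alpha1_coordinates:
  "theta I1 = 1" "gam1 I1 = 1" "gam2 I1 = 0" "gam3 I1 = 1"
  "hA I1 = -2/3" "hB I1 = 1/3" "hC I1 = 1/3"
  by (simp_all add: theta_def gam1_def gam2_def gam3_def unitv_def
      hA_def hB_def hC_def fwh_def fwtab_def of_rat_divide)

theorem lemma6p14:
  shows "hw_vector (1/15) omega4 (basis {#} (fwt I1))"
proof -
  let ?v = "basis {#} (fwt I1)"
  have vop_vanishes: "vop q n ?v = 0" if "- n - 1 < q I1" for q n
    using that by (rule vop_fwt_vanishes)
  have raising: "vop (- theta) 1 ?v = 0" "vop (sroot i) 0 ?v = 0" for i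
    by (rule vop_vanishes; simp add: alpha1_coordinates unitv_def)+
  have vop_gamma: "vop g n ?v = 0" if "g \<in> {gam1, -gam1, gam2, -gam2, gam3, -gam3}" "n \<ge> 1" for g n
    using that by (auto intro!: vop_vanishes simp: alpha1_coordinates)
  have "Lop 1 ?v = 0" "Lop 2 ?v = 0"
    by (simp_all add: Lop_def omega_mode_def quad_basis_vanishes vop_gamma)
  moreover have "Lop 0 ?v = smult (1/15) ?v"
    by (simp add: Lop_def omega_mode_def vop_gamma quad_one_basis pair_hv_fwt
        alpha1_coordinates smult_def fun_eq_iff)
  ultimately show ?thesis
    using raising basis_nonzero Proj_fwt_I1
    by (simp add: hw_vector_def basis_def)
qed

end
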